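(* Let $X$ be a compact metric space with metric $d$, $T:X\to X$ continuous, and $\Phi=\{\phi_n\}_{n\ge1}$ a supadditive potential on $X$. Fix a positive integer $k$. Then there is a constant $C$ such that for every $\eta>0$ there exists $\epsilon_0>0$ such that for every $0<\epsilon<\epsilon_0$, every $n\ge1$ and every $x\in X$, \[ \phi_n(x)\ge\sup_{y\in B_n(x,\epsilon)}\sum_{i=0}^{n-1}\frac1k\phi_k(T^iy)-n\eta-C. \]
   Context: A supadditive potential is a sequence of continuous $\phi_n:X\to\mathbb{R}$ with $\phi_{n+m}(x)\ge\phi_n(x)+\phi_m(T^nx)$ for all $x\in X$, $n,m\ge1$. $B_n(x,\epsilon)=\{y\in X:d(T^ix,T^iy)<\epsilon\ \text{for}\ 0\le i\le n-1\}$. *)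

theory Defs
  imports "HOL-Analysis.Analysis"
begin

definition supadditive_potential :: "'a::metric_space set \<Rightarrow> ('a \<Rightarrow> 'a) \<Rightarrow> (nat \<Rightarrow> 'a \<Rightarrow> real) \<Rightarrow> bool" where
  "supadditive_potential X T \<phi> \<longleftrightarrow>
     (\<forall>n\<ge>1. continuous_on X (\<phi> n)) \<and>
     (\<forall>x\<in>X. \<forall>n\<ge>1. \<forall>m\<ge>1. \<phi> (n + m) x \<ge> \<phi> n x + \<phi> m ((T ^^ n) x))"

definition bowen_ball :: "'a::metric_space set \<Rightarrow> ('a \<Rightarrow> 'a) \<Rightarrow> nat \<Rightarrow> 'a \<Rightarrow> real \<Rightarrow> 'a set" where
  "bowen_ball X T n x \<epsilon> = {y \<in> X. \<forall>i<n. dist ((T ^^ i) x) ((T ^^ i) y) < \<epsilon>}"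

end

theory Submission
  imports Defs
begin

text \<open>Splitting the orbit segment of length \<open>n\<close> into blocks of length \<open>k\<close> that start at
  an offset \<open>j < k\<close>, supadditivity bounds \<open>\<phi> n x\<close> from below by the sum of \<open>\<phi> k\<close> over the
  blocks minus \<open>2M\<close>, where \<open>M\<close> bounds \<open>|\<phi> m|\<close> on \<open>X\<close> for \<open>1 \<le> m \<le> k\<close>. Summing over the
  \<open>k\<close> offsets counts every term \<open>\<phi> k (T\<^sup>i x)\<close> with \<open>i + k \<le> n\<close> exactly once, so
  \<open>k \<phi> n x \<ge> (\<Sum>i<n. \<phi> k (T\<^sup>i x)) - 3kM\<close>. Uniform continuity of \<open>\<phi> k\<close> on the compact \<open>X\<close>
  then allows replacing \<open>x\<close> by any \<open>y\<close> in a Bowen ball of small radius at a cost of \<open>n\<eta>\<close>.\<close>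

lemma funpow_in_invariant:
  assumes "T ` X \<subseteq> X" "x \<in> X" shows "(T ^^ i) x \<in> X"
  using assms by (induction i) auto

lemma funpow_add_apply: "(T ^^ (m + n)) x = (T ^^ n) ((T ^^ m) x)"
  by (subst add.commute) (simp add: funpow_add)

lemma supadditive_potentialD:
  assumes "supadditive_potential X T \<phi>" "x \<in> X" "n \<ge> 1" "m \<ge> 1"
  shows "\<phi> (n + m) x \<ge> \<phi> n x + \<phi> m ((T ^^ n) x)"
  using assms unfolding supadditive_potential_def by blast

lemma supadditive_potential_continuous_on:
  assumes "supadditive_potential X T \<phi>" "n \<ge> 1"
  shows "continuous_on X (\<phi> n)"
  using assms unfolding supadditive_potential_def by blast

text \<open>Truncated subtraction makes \<open>{..<Suc n - k}\<close> the set of \<open>i\<close> with \<open>i + k \<le> n\<close>.\<close>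

lemma sum_residue_classes:
  fixes f :: "nat \<Rightarrow> 'b::comm_monoid_add"
  assumes "k > 0"
  shows "(\<Sum>j<k. \<Sum>l<(n - j) div k. f (j + l * k)) = (\<Sum>i<Suc n - k. f i)"
proof -
  have mem: "l < (n - j) div k \<longleftrightarrow> j + l * k < Suc n - k" for j l
    using less_eq_div_iff_mult_less_eq[OF assms, of "Suc l" "n - j"] assms
    by (simp add: Suc_le_eq) arith
  have "bij_betw (\<lambda>(j, l). j + l * k) (SIGMA j:{..<k}. {..<(n - j) div k}) {..<Suc n - k}"
    by (rule bij_betwI[where g = "\<lambda>i. (i mod k, i div k)"])
       (use assms in \<open>auto simp: mem\<close>)
  then show ?thesis
    by (simp add: sum.Sigma sum.reindex_bij_betw[symmetric] split_def)
qed

lemma supadditive_potential_ge_block_sum: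
  assumes sp: "supadditive_potential X T \<phi>" and TX: "T ` X \<subseteq> X" and k: "k \<ge> 1"
    and lower: "\<And>m x. 1 \<le> m \<Longrightarrow> m < k \<Longrightarrow> x \<in> X \<Longrightarrow> \<phi> m x \<ge> - M" and M: "M \<ge> 0"
    and "n \<ge> 1" "x \<in> X"
  shows "\<phi> n x \<ge> (\<Sum>l<n div k. \<phi> k ((T ^^ (l * k)) x)) - M"
  using \<open>n \<ge> 1\<close> \<open>x \<in> X\<close>
proof (induction n arbitrary: x rule: less_induct)
  case (less n)
  consider "n < k" | "n = k" | "n > k" by linarith
  then show ?case
  proof cases
    case 1
    then show ?thesis using lower less.prems by simp
  next
    case 2
    then show ?thesis using k M by simp
  next
    case 3
    have TkX: "(T ^^ k) x \<in> X" using funpow_in_invariant[OF TX less.prems(2)] .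
    have "\<phi> n x \<ge> \<phi> k x + \<phi> (n - k) ((T ^^ k) x)"
      using supadditive_potentialD[OF sp less.prems(2) k, of "n - k"] 3 by simp
    moreover have "\<phi> (n - k) ((T ^^ k) x)
        \<ge> (\<Sum>l<(n - k) div k. \<phi> k ((T ^^ (l * k)) ((T ^^ k) x))) - M"
      using less.IH[of "n - k" "(T ^^ k) x"] 3 k TkX by simp
    moreover have "n div k = Suc ((n - k) div k)"
      using 3 k by (simp add: le_div_geq)
    then have "(\<Sum>l<n div k. \<phi> k ((T ^^ (l * k)) x))
        = \<phi> k x + (\<Sum>l<(n - k) div k. \<phi> k ((T ^^ (l * k)) ((T ^^ k) x)))"
      by (simp only: sum.lessThan_Suc_shift) (simp add: funpow_add_apply[symmetric])
    ultimately show ?thesis by linarith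
  qed
qed

lemma supadditive_potential_ge_shifted_block_sum:
  assumes sp: "supadditive_potential X T \<phi>" and TX: "T ` X \<subseteq> X" and k: "k \<ge> 1"
    and lower: "\<And>m x. 1 \<le> m \<Longrightarrow> m < k \<Longrightarrow> x \<in> X \<Longrightarrow> \<phi> m x \<ge> - M" and M: "M \<ge> 0"
    and j: "j < k" and n: "n \<ge> 1" and x: "x \<in> X"
  shows "\<phi> n x \<ge> (\<Sum>l<(n - j) div k. \<phi> k ((T ^^ (j + l * k)) x)) - 2 * M"
proof -
  consider "j = 0" | "n \<le> j" | "1 \<le> j" "j < n" by linarith
  then show ?thesis
  proof cases
    case 1
    then show ?thesis
      using supadditive_potential_ge_block_sum[OF sp TX k lower M n x] M by simp
  next
    case 2
    then show ?thesis using lower[OF n _ x] j M by simp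
  next
    case 3
    have "\<phi> n x \<ge> \<phi> j x + \<phi> (n - j) ((T ^^ j) x)"
      using supadditive_potentialD[OF sp x \<open>1 \<le> j\<close>, of "n - j"] 3 by simp
    moreover have "\<phi> j x \<ge> - M" using lower 3 j x by simp
    moreover have "\<phi> (n - j) ((T ^^ j) x)
        \<ge> (\<Sum>l<(n - j) div k. \<phi> k ((T ^^ (l * k)) ((T ^^ j) x))) - M"
      using supadditive_potential_ge_block_sum[OF sp TX k lower M, of "n - j" "(T ^^ j) x"]
        3 funpow_in_invariant[OF TX x] by simp
    ultimately show ?thesis by (simp add: funpow_add_apply)
  qed
qed

lemma supadditive_potential_ge_ergodic_sum:
  assumes sp: "supadditive_potential X T \<phi>" and TX: "T ` X \<subseteq> X" and k: "k \<ge> 1"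
    and bound: "\<And>m x. 1 \<le> m \<Longrightarrow> m \<le> k \<Longrightarrow> x \<in> X \<Longrightarrow> \<bar>\<phi> m x\<bar> \<le> M"
    and n: "n \<ge> 1" and x: "x \<in> X"
  shows "real k * \<phi> n x \<ge> (\<Sum>i<n. \<phi> k ((T ^^ i) x)) - 3 * real k * M"
proof -
  define f where "f i = \<phi> k ((T ^^ i) x)" for i
  have M: "M \<ge> 0" using bound[OF k order.refl x] by linarith
  have lower: "\<phi> m y \<ge> - M" if "1 \<le> m" "m < k" "y \<in> X" for m y
    using bound[of m y] that by linarith
  have f_le: "f i \<le> M" for i
    using bound[OF k order.refl funpow_in_invariant[OF TX x]] unfolding f_def by (rule abs_le_D1)
  have "(\<Sum>i<Suc n - k. f i) - 2 * real k * M
      = (\<Sum>j<k. (\<Sum>l<(n - j) div k. f (j + l * k)) - 2 * M)"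
    using sum_residue_classes[of k f n] k by (simp add: sum_subtractf)
  also have "\<dots> \<le> (\<Sum>j<k. \<phi> n x)"
    using supadditive_potential_ge_shifted_block_sum[OF sp TX k lower M _ n x]
    by (intro sum_mono) (simp add: f_def)
  finally have "real k * \<phi> n x \<ge> (\<Sum>i<Suc n - k. f i) - 2 * real k * M" by simp
  moreover have "(\<Sum>i<n. f i) \<le> (\<Sum>i<Suc n - k. f i) + real k * M"
  proof -
    have "(\<Sum>i<n. f i) = (\<Sum>i<Suc n - k. f i) + (\<Sum>i\<in>{Suc n - k..<n}. f i)"
      using sum.atLeastLessThan_concat[of 0 "Suc n - k" n f] n k
      by (simp add: atLeast0LessThan)
    also have "(\<Sum>i\<in>{Suc n - k..<n}. f i) \<le> real (card {Suc n - k..<n}) * M"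
      using sum_bounded_above[of "{Suc n - k..<n}" f M] f_le by simp
    also have "\<dots> \<le> real k * M"
      using M by (intro mult_right_mono) auto
    finally show ?thesis by simp
  qed
  ultimately show ?thesis unfolding f_def by linarith
qed

lemma ergodic_sum_bowen_ball_le:
  fixes f :: "'a::metric_space \<Rightarrow> real"
  assumes uc: "uniformly_continuous_on X f" and TX: "T ` X \<subseteq> X" and "\<eta> > 0"
  obtains \<delta> where "\<delta> > 0"
    "\<And>\<epsilon> n x y. \<epsilon> \<le> \<delta> \<Longrightarrow> x \<in> X \<Longrightarrow> y \<in> bowen_ball X T n x \<epsilon> \<Longrightarrow>
       (\<Sum>i<n. f ((T ^^ i) y)) \<le> (\<Sum>i<n. f ((T ^^ i) x)) + real n * \<eta>"
proof -
  obtain \<delta> where \<delta>: "\<delta> > 0"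
    "\<And>a b. a \<in> X \<Longrightarrow> b \<in> X \<Longrightarrow> dist b a < \<delta> \<Longrightarrow> dist (f b) (f a) < \<eta>"
    using uc \<open>\<eta> > 0\<close> unfolding uniformly_continuous_on_def by metis
  show thesis
  proof (rule that[OF \<delta>(1)])
    fix \<epsilon> n x y assume "\<epsilon> \<le> \<delta>" "x \<in> X" and y: "y \<in> bowen_ball X T n x \<epsilon>"
    have "f ((T ^^ i) y) \<le> f ((T ^^ i) x) + \<eta>" if "i < n" for i
    proof -
      have "dist ((T ^^ i) y) ((T ^^ i) x) < \<delta>"
        using y that \<open>\<epsilon> \<le> \<delta>\<close> unfolding bowen_ball_def by (auto simp: dist_commute)
      then have "dist (f ((T ^^ i) y)) (f ((T ^^ i) x)) < \<eta>"
        using y \<delta>(2) funpow_in_invariant[OF TX] \<open>x \<in> X\<close> unfolding bowen_ball_def by blast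
      then show ?thesis by (simp add: dist_real_def)
    qed
    then have "(\<Sum>i<n. f ((T ^^ i) y)) \<le> (\<Sum>i<n. f ((T ^^ i) x) + \<eta>)"
      by (intro sum_mono) simp
    then show "(\<Sum>i<n. f ((T ^^ i) y)) \<le> (\<Sum>i<n. f ((T ^^ i) x)) + real n * \<eta>"
      by (simp add: sum.distrib)
  qed
qed

lemma supadditive_potential_ergodic_average_le:
  assumes "compact X" "T ` X \<subseteq> X" and sp: "supadditive_potential X T \<phi>" and k: "k \<ge> 1"
  obtains C where "\<And>n x. n \<ge> 1 \<Longrightarrow> x \<in> X \<Longrightarrow>
    (\<Sum>i<n. (1 / real k) * \<phi> k ((T ^^ i) x)) \<le> \<phi> n x + C"
proof -
  have "bounded (\<Union>m\<in>{1..k}. \<phi> m ` X)"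
    using assms(1) supadditive_potential_continuous_on[OF sp]
    by (intro bounded_UN ballI compact_imp_bounded compact_continuous_image) auto
  then obtain M where bound: "\<And>m x. 1 \<le> m \<Longrightarrow> m \<le> k \<Longrightarrow> x \<in> X \<Longrightarrow> \<bar>\<phi> m x\<bar> \<le> M"
    unfolding bounded_pos by fastforce
  show thesis
  proof (rule that[of "3 * M"])
    fix n :: nat and x assume "n \<ge> 1" "x \<in> X"
    with sp assms(2) k bound
    have "real k * \<phi> n x \<ge> (\<Sum>i<n. \<phi> k ((T ^^ i) x)) - 3 * real k * M"
      by (rule supadditive_potential_ge_ergodic_sum)
    then have "(\<Sum>i<n. \<phi> k ((T ^^ i) x)) \<le> (\<phi> n x + 3 * M) * real k"
      by argo
    then have "(\<Sum>i<n. \<phi> k ((T ^^ i) x)) / real k \<le> \<phi> n x + 3 * M"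
      using k by (simp add: pos_divide_le_eq)
    then show "(\<Sum>i<n. (1 / real k) * \<phi> k ((T ^^ i) x)) \<le> \<phi> n x + 3 * M"
      by (simp add: sum_divide_distrib)
  qed
qed

theorem mainTheorem13:
  fixes X :: "'a::metric_space set" and T :: "'a \<Rightarrow> 'a" and \<phi> :: "nat \<Rightarrow> 'a \<Rightarrow> real" and k :: nat
  assumes "compact X"
    and "continuous_on X T" and "T ` X \<subseteq> X"
    and "supadditive_potential X T \<phi>"
    and "k \<ge> 1"
  shows "\<exists>C::real. \<forall>\<eta>>0. \<exists>\<epsilon>0>0. \<forall>\<epsilon>. 0 < \<epsilon> \<and> \<epsilon> < \<epsilon>0 \<longrightarrow>
           (\<forall>n\<ge>1. \<forall>x\<in>X. \<forall>y\<in>bowen_ball X T n x \<epsilon>.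
              \<phi> n x \<ge> (\<Sum>i<n. (1 / real k) * \<phi> k ((T ^^ i) y)) - real n * \<eta> - C)"
proof -
  obtain C where avg: "\<And>n x. n \<ge> 1 \<Longrightarrow> x \<in> X \<Longrightarrow>
      (\<Sum>i<n. (1 / real k) * \<phi> k ((T ^^ i) x)) \<le> \<phi> n x + C"
    using supadditive_potential_ergodic_average_le[OF assms(1,3,4,5)] by blast
  have uc: "uniformly_continuous_on X (\<lambda>z. (1 / real k) * \<phi> k z)"
    using supadditive_potential_continuous_on[OF assms(4,5)] assms(1)
    by (intro compact_uniformly_continuous continuous_on_mult_left)
  show ?thesis
  proof (rule exI[of _ C], intro allI impI)
    fix \<eta> :: real assume "\<eta> > 0"
    then obtain \<delta> where "\<delta> > 0" and close:
      "\<And>\<epsilon> n x y. \<epsilon> \<le> \<delta> \<Longrightarrow> x \<in> X \<Longrightarrow> y \<in> bowen_ball X T n x \<epsilon> \<Longrightarrow>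
         (\<Sum>i<n. (1 / real k) * \<phi> k ((T ^^ i) y))
           \<le> (\<Sum>i<n. (1 / real k) * \<phi> k ((T ^^ i) x)) + real n * \<eta>"
      using ergodic_sum_bowen_ball_le[OF uc assms(3)] by blast
    show "\<exists>\<epsilon>0>0. \<forall>\<epsilon>. 0 < \<epsilon> \<and> \<epsilon> < \<epsilon>0 \<longrightarrow>
           (\<forall>n\<ge>1. \<forall>x\<in>X. \<forall>y\<in>bowen_ball X T n x \<epsilon>.
              \<phi> n x \<ge> (\<Sum>i<n. (1 / real k) * \<phi> k ((T ^^ i) y)) - real n * \<eta> - C)"
      using \<open>\<delta> > 0\<close> avg close[OF less_imp_le] by (intro exI[of _ \<delta>]) fastforce
  qed
qed

end
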